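(* For each $i\in I$, the map $T\mapsto\widetilde\lambda_i(T)$ from $B(\mathcal H_i)$ to $B(\mathcal F)$ is a (non-unital) $*$-homomorphism, i.e. it is linear, $\widetilde\lambda_i(TS)=\widetilde\lambda_i(T)\widetilde\lambda_i(S)$ and $\widetilde\lambda_i(T^* )=\widetilde\lambda_i(T)^*$ for all $T,S\in B(\mathcal H_i)$.
   Context: Same setting as the V-monotone left representation: $(I,\le)$ totally ordered; $I_n$ the set of $(i_1,\dots,i_n)$ with $i_1>\dots>i_m<\dots<i_n$ for some $m$ (strict); $I_n(i)=\{(i_1,\dots,i_n)\in I_n:i_1=i\text{ or }(i,i_1,\dots,i_n)\in I_{n+1}\}$. $(\mathcal H_i,\xi_i)$ Hilbert spaces with unit vectors, $\mathring{\mathcal H}_i=\mathcal H_i\ominus\mathbb{C}\xi_i$; $\mathcal F=\mathbb{C}\xi\oplus\bigoplus_{n\ge1}\bigoplus_{i_1\ne\dots\ne i_n}\mathring{\mathcal H}_{i_1}\otimes\dots\otimes\mathring{\mathcal H}_{i_n}$ (consecutive indices distinct), $\mathcal F_i$ the subspace with $i_1\ne i$; $V_i:\mathcal H_i\otimes\mathcal F_i\to\mathcal F$ the unitary $V_i(\xi_i\otimes\xi)=\xi$, $V_i(x\otimes\xi)=x$, $V_i(\xi_i\otimes v)=v$, $V_i(x\otimes v)=x\otimes v$; $\lambda_i(T)=V_i(T\otimes\mathrm{id})V_i^{-1}$; $U_i$ the orthogonal projection onto $\mathcal V_i=\mathbb{C}\xi\oplus\bigoplus_{n\ge1}\bigoplus_{(i_1,\dots,i_n)\in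 I_n(i)}\mathring{\mathcal H}_{i_1}\otimes\dots\otimes\mathring{\mathcal H}_{i_n}$; $\widetilde\lambda_i(T)=U_i\lambda_i(T)U_i$. *)

theory Defs
  imports "HOL-Analysis.Analysis"
begin

definition l2 :: "'a set \<Rightarrow> ('a \<Rightarrow> complex) set" where
  "l2 S = {f. (\<forall>x. x \<notin> S \<longrightarrow> f x = 0) \<and> (\<lambda>x. (cmod (f x))\<^sup>2) summable_on S}"

definition l2_inner :: "'a set \<Rightarrow> ('a \<Rightarrow> complex) \<Rightarrow> ('a \<Rightarrow> complex) \<Rightarrow> complex" where
  "l2_inner S f g = (\<Sum>\<^sub>\<infinity>x\<in>S. cnj (f x) * g x)"

definition l2_norm :: "'a set \<Rightarrow> ('a \<Rightarrow> complex) \<Rightarrow> real" where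
  "l2_norm S f = sqrt (\<Sum>\<^sub>\<infinity>x\<in>S. (cmod (f x))\<^sup>2)"

text \<open>T is a bounded linear operator on l2(S) (values outside l2(S) are irrelevant junk).\<close>
definition bounded_op :: "'a set \<Rightarrow> (('a \<Rightarrow> complex) \<Rightarrow> ('a \<Rightarrow> complex)) \<Rightarrow> bool" where
  "bounded_op S T \<longleftrightarrow>
     (\<forall>f\<in>l2 S. T f \<in> l2 S) \<and>
     (\<forall>f\<in>l2 S. \<forall>g\<in>l2 S. \<forall>a b. T (\<lambda>x. a * f x + b * g x) = (\<lambda>x. a * T f x + b * T g x)) \<and>
     (\<exists>K. \<forall>f\<in>l2 S. l2_norm S (T f) \<le> K * l2_norm S f)"

definition is_adjoint :: "'a set \<Rightarrow> (('a \<Rightarrow> complex) \<Rightarrow> ('a \<Rightarrow> complex)) \<Rightarrow>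
     (('a \<Rightarrow> complex) \<Rightarrow> ('a \<Rightarrow> complex)) \<Rightarrow> bool" where
  "is_adjoint S T T' \<longleftrightarrow> bounded_op S T' \<and>
     (\<forall>f\<in>l2 S. \<forall>g\<in>l2 S. l2_inner S (T f) g = l2_inner S f (T' g))"

definition vshaped :: "'i::linorder list \<Rightarrow> bool" where
  "vshaped xs \<longleftrightarrow> (\<exists>m. 0 < m \<and> m \<le> length xs \<and>
      sorted_wrt (>) (take m xs) \<and> sorted_wrt (<) (drop (m - 1) xs))"

definition In_at :: "'i::linorder \<Rightarrow> 'i list \<Rightarrow> bool" where
  "In_at i xs \<longleftrightarrow> vshaped xs \<and> (hd xs = i \<or> vshaped (i # xs))"

section \<open>Spaces H_i = l2({None} \<union> Some ` B i) (None = xi_i) and the Fock space\<close>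

definition Hbasis :: "('i \<Rightarrow> 'b set) \<Rightarrow> 'i \<Rightarrow> 'b option set" where
  "Hbasis B i = insert None (Some ` B i)"

text \<open>Basis of the free product Fock space: words of basis vectors of the
  reduced spaces with consecutive indices distinct; [] is the vacuum xi.\<close>
definition fock_words :: "('i \<Rightarrow> 'b set) \<Rightarrow> ('i \<times> 'b) list set" where
  "fock_words B = {w. (\<forall>(j, b)\<in>set w. b \<in> B j) \<and>
      (\<forall>k. Suc k < length w \<longrightarrow> fst (w ! k) \<noteq> fst (w ! Suc k))}"

text \<open>The unitary V_i : H_i \<otimes> F_i \<rightarrow> F on basis vectors, and its inverse.\<close>
definition Vjoin :: "'i \<Rightarrow> 'b option \<times> ('i \<times> 'b) list \<Rightarrow> ('i \<times> 'b) list" where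
  "Vjoin i p = (case fst p of None \<Rightarrow> snd p | Some b \<Rightarrow> (i, b) # snd p)"

definition Vsplit :: "'i \<Rightarrow> ('i \<times> 'b) list \<Rightarrow> 'b option \<times> ('i \<times> 'b) list" where
  "Vsplit i w = (case w of [] \<Rightarrow> (None, [])
      | (j, b) # w' \<Rightarrow> (if j = i then (Some b, w') else (None, w)))"

text \<open>lambda_i(T) = V_i (T \<otimes> id) V_i^{-1}, written in coordinates.\<close>
definition lambda_op :: "('i \<Rightarrow> 'b set) \<Rightarrow> 'i \<Rightarrow>
    (('b option \<Rightarrow> complex) \<Rightarrow> ('b option \<Rightarrow> complex)) \<Rightarrow>
    (('i \<times> 'b) list \<Rightarrow> complex) \<Rightarrow> (('i \<times> 'b) list \<Rightarrow> complex)" where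
  "lambda_op B i T v = (\<lambda>w. if w \<in> fock_words B then
      T (\<lambda>a'. v (Vjoin i (a', snd (Vsplit i w)))) (fst (Vsplit i w)) else 0)"

definition Vwords :: "('i::linorder \<Rightarrow> 'b set) \<Rightarrow> 'i \<Rightarrow> ('i \<times> 'b) list set" where
  "Vwords B i = {w \<in> fock_words B. w = [] \<or> In_at i (map fst w)}"

definition U_proj :: "('i::linorder \<Rightarrow> 'b set) \<Rightarrow> 'i \<Rightarrow>
    (('i \<times> 'b) list \<Rightarrow> complex) \<Rightarrow> (('i \<times> 'b) list \<Rightarrow> complex)" where
  "U_proj B i v = (\<lambda>w. if w \<in> Vwords B i then v w else 0)"

definition tilde_lambda :: "('i::linorder \<Rightarrow> 'b set) \<Rightarrow> 'i \<Rightarrow>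
    (('b option \<Rightarrow> complex) \<Rightarrow> ('b option \<Rightarrow> complex)) \<Rightarrow>
    (('i \<times> 'b) list \<Rightarrow> complex) \<Rightarrow> (('i \<times> 'b) list \<Rightarrow> complex)" where
  "tilde_lambda B i T v = U_proj B i (lambda_op B i T (U_proj B i v))"

end

theory Submission imports Defs begin

text \<open>Every Fock word w factors uniquely as V_i(a, r) with a a basis vector of H_i
  (the vacuum \<xi>_i or a letter coloured i) and r a word of \<F>_i, i.e. not starting
  with colour i; so \<F> is the Hilbert direct sum over r of copies of H_i, and
  \<lambda>_i(T) acts as T on each copy. Whether V_i(a, r) lies in \<V>_i depends only
  on r, so U_i is a union of whole copies, commutes with \<lambda>_i(T), and
  \<tilde>\<lambda>_i(T) acts as T on the copies in \<V>_i and as 0 elsewhere. All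
  properties then follow fibre by fibre from the corresponding ones of T.\<close>

definition Fi_words :: "('i \<Rightarrow> 'b set) \<Rightarrow> 'i \<Rightarrow> ('i \<times> 'b) list set" where
  "Fi_words B i = {r \<in> fock_words B. r = [] \<or> fst (hd r) \<noteq> i}"

lemma fock_words_Nil [simp]: "[] \<in> fock_words B"
  by (simp add: fock_words_def)

lemma fock_words_Cons_iff:
  "(j, b) # w \<in> fock_words B \<longleftrightarrow> b \<in> B j \<and> w \<in> fock_words B \<and> (w = [] \<or> fst (hd w) \<noteq> j)"
proof -
  have "(\<forall>k. Suc k < length ((j, b) # w) \<longrightarrow> fst (((j, b) # w) ! k) \<noteq> fst (((j, b) # w) ! Suc k))
      \<longleftrightarrow> (w = [] \<or> fst (hd w) \<noteq> j) \<and> (\<forall>k. Suc k < length w \<longrightarrow> fst (w ! k) \<noteq> fst (w ! Suc k))"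
    by (cases w) (auto simp: All_less_Suc2)
  then show ?thesis by (auto simp: fock_words_def)
qed

lemma vshaped_tl:
  assumes "vshaped (x # xs)" "xs \<noteq> []"
  shows "vshaped xs"
proof -
  obtain m where m: "0 < m" "m \<le> length (x # xs)" "sorted_wrt (>) (take m (x # xs))"
    "sorted_wrt (<) (drop (m - 1) (x # xs))"
    using assms(1) unfolding vshaped_def by blast
  show ?thesis
  proof (cases "m = 1")
    case True
    then show ?thesis using m assms(2) unfolding vshaped_def
      by (intro exI[of _ 1]) (cases xs, auto)
  next
    case False
    then obtain m' where "m = Suc (Suc m')" using m(1) by (cases m; cases "m - 1") auto
    then show ?thesis using m unfolding vshaped_def
      by (intro exI[of _ "Suc m'"]) auto
  qed
qed

lemma vshaped_singleton [simp]: "vshaped [x]"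
  unfolding vshaped_def by (intro exI[of _ 1]) simp

lemma Vsplit_Vjoin: "r \<in> Fi_words B i \<Longrightarrow> Vsplit i (Vjoin i (a, r)) = (a, r)"
  by (cases a; cases r) (auto simp: Fi_words_def Vsplit_def Vjoin_def)

lemma Vjoin_in_fock_words: "r \<in> Fi_words B i \<Longrightarrow> a \<in> Hbasis B i \<Longrightarrow> Vjoin i (a, r) \<in> fock_words B"
  by (cases a) (auto simp: Fi_words_def Vjoin_def Hbasis_def fock_words_Cons_iff)

lemma Vjoin_notin_fock_words: "a \<notin> Hbasis B i \<Longrightarrow> Vjoin i (a, r) \<notin> fock_words B"
  by (cases a) (auto simp: Vjoin_def Hbasis_def fock_words_Cons_iff)

lemma Vsplit_in_fock_words:
  assumes "w \<in> fock_words B"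
  shows "snd (Vsplit i w) \<in> Fi_words B i" "fst (Vsplit i w) \<in> Hbasis B i"
    "Vjoin i (Vsplit i w) = w"
  using assms
  by (cases w; auto simp: Fi_words_def Vsplit_def Vjoin_def Hbasis_def fock_words_Cons_iff
      split: prod.splits)+

lemma fock_words_VjoinE:
  assumes "w \<in> fock_words B"
  obtains a r where "a \<in> Hbasis B i" "r \<in> Fi_words B i" "w = Vjoin i (a, r)"
  using Vsplit_in_fock_words[OF assms, of i] by (metis prod.collapse)

lemma inj_Vjoin_left: "inj (\<lambda>a. Vjoin i (a, r))"
  by (rule injI) (auto simp: Vjoin_def split: option.splits)

lemma bij_betw_Vjoin:
  "bij_betw (\<lambda>(r, a). Vjoin i (a, r)) (Fi_words B i \<times> Hbasis B i) (fock_words B)"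
proof (rule bij_betw_imageI)
  show "inj_on (\<lambda>(r, a). Vjoin i (a, r)) (Fi_words B i \<times> Hbasis B i)"
  proof (rule inj_onI, clarify)
    fix r a r' a'
    assume "r \<in> Fi_words B i" "r' \<in> Fi_words B i" "Vjoin i (a, r) = Vjoin i (a', r')"
    then show "r = r' \<and> a = a'" by (metis Vsplit_Vjoin prod.inject)
  qed
  show "(\<lambda>(r, a). Vjoin i (a, r)) ` (Fi_words B i \<times> Hbasis B i) = fock_words B"
    by (auto intro: Vjoin_in_fock_words elim: fock_words_VjoinE[of _ _ i])
qed

text \<open>The combinatorial heart of the matter: prefixing a word of \<F>_i by a letter of
  colour i keeps it in, or out of, \<V>_i.\<close>
lemma Vjoin_in_Vwords_iff:
  assumes r: "r \<in> Fi_words B i" and a: "a \<in> Hbasis B i"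
  shows "Vjoin i (a, r) \<in> Vwords B i \<longleftrightarrow> r \<in> Vwords B i"
proof (cases a)
  case None
  then show ?thesis by (simp add: Vjoin_def)
next
  case (Some b)
  have "(i, b) # r \<in> fock_words B" using Vjoin_in_fock_words[OF r a] Some by (simp add: Vjoin_def)
  then have "Vjoin i (a, r) \<in> Vwords B i \<longleftrightarrow> vshaped (i # map fst r)"
    using Some by (simp add: Vjoin_def Vwords_def In_at_def)
  also have "\<dots> \<longleftrightarrow> r \<in> Vwords B i"
    using r vshaped_tl[of i "map fst r"]
    by (cases r) (auto simp: Fi_words_def Vwords_def In_at_def)
  finally show ?thesis .
qed

lemma Vwords_subset_fock_words: "Vwords B i \<subseteq> fock_words B"
  unfolding Vwords_def by auto

lemma l2_vanishes: "v \<in> l2 S \<Longrightarrow> x \<notin> S \<Longrightarrow> v x = 0"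
  unfolding l2_def by auto

lemma l2_zero [simp]: "(\<lambda>_. 0) \<in> l2 S"
  unfolding l2_def by simp

lemma l2_norm_zero [simp]: "l2_norm S (\<lambda>_. 0) = 0"
  unfolding l2_norm_def by simp

lemma l2_inner_zero_left [simp]: "l2_inner S (\<lambda>_. 0) g = 0"
  unfolding l2_inner_def by simp

lemma l2_inner_zero_right [simp]: "l2_inner S f (\<lambda>_. 0) = 0"
  unfolding l2_inner_def by simp

lemma l2_norm_nonneg: "0 \<le> l2_norm S v"
  unfolding l2_norm_def by (intro real_sqrt_ge_zero infsum_nonneg) simp

lemma l2_norm_sq: "(l2_norm S v)\<^sup>2 = (\<Sum>\<^sub>\<infinity>x\<in>S. (cmod (v x))\<^sup>2)"
  unfolding l2_norm_def by (intro real_sqrt_pow2 infsum_nonneg) simp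

lemma l2_inner_summable:
  assumes "f \<in> l2 S" "g \<in> l2 S"
  shows "(\<lambda>x. cnj (f x) * g x) summable_on S"
proof (rule abs_summable_summable)
  have "(\<lambda>x. (cmod (f x))\<^sup>2 + (cmod (g x))\<^sup>2) summable_on S"
    using assms by (intro summable_on_add) (auto simp: l2_def)
  moreover have "norm (cnj (f x) * g x) \<le> (cmod (f x))\<^sup>2 + (cmod (g x))\<^sup>2" for x
  proof -
    have "cmod (f x) * cmod (g x) \<le> 2 * cmod (f x) * cmod (g x)" by simp
    moreover have "norm (cnj (f x) * g x) = cmod (f x) * cmod (g x)" by (simp add: norm_mult)
    ultimately show ?thesis using sum_squares_bound[of "cmod (f x)" "cmod (g x)"] by linarith
  qed
  ultimately show "(\<lambda>x. norm (cnj (f x) * g x)) summable_on S"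
    by (rule summable_on_comparison_test) auto
qed

lemma bounded_op_l2: "bounded_op S T \<Longrightarrow> f \<in> l2 S \<Longrightarrow> T f \<in> l2 S"
  unfolding bounded_op_def by blast

lemma bounded_op_linear: "bounded_op S T \<Longrightarrow> f \<in> l2 S \<Longrightarrow> g \<in> l2 S \<Longrightarrow>
    T (\<lambda>x. a * f x + b * g x) = (\<lambda>x. a * T f x + b * T g x)"
  unfolding bounded_op_def by blast

lemma bounded_op_nonneg_bound:
  assumes "bounded_op S T"
  obtains K where "0 \<le> K" "\<And>f. f \<in> l2 S \<Longrightarrow> l2_norm S (T f) \<le> K * l2_norm S f"
proof -
  obtain K where K: "\<And>f. f \<in> l2 S \<Longrightarrow> l2_norm S (T f) \<le> K * l2_norm S f"
    using assms unfolding bounded_op_def by blast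
  have "K * l2_norm S f \<le> max K 0 * l2_norm S f" for f
    by (intro mult_right_mono l2_norm_nonneg) simp
  with K show thesis by (intro that[of "max K 0"]) (auto intro: order_trans)
qed

lemma bounded_op_comp:
  assumes T: "bounded_op S T" and R: "bounded_op S R"
  shows "bounded_op S (T \<circ> R)"
proof -
  obtain K where K0: "0 \<le> K" and K: "\<And>f. f \<in> l2 S \<Longrightarrow> l2_norm S (T f) \<le> K * l2_norm S f"
    using bounded_op_nonneg_bound[OF T] by blast
  obtain L where L: "\<And>f. f \<in> l2 S \<Longrightarrow> l2_norm S (R f) \<le> L * l2_norm S f"
    using R unfolding bounded_op_def by blast
  have "l2_norm S (T (R f)) \<le> (K * L) * l2_norm S f" if "f \<in> l2 S" for f
    using K[OF bounded_op_l2[OF R that]] mult_left_mono[OF L[OF that] K0] by simp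
  then show ?thesis
    using bounded_op_l2[OF T] bounded_op_l2[OF R] bounded_op_linear[OF T] bounded_op_linear[OF R]
    unfolding bounded_op_def[of S "T \<circ> R"] by auto
qed

lemma l2_lincomb:
  assumes f: "f \<in> l2 S" and g: "g \<in> l2 S"
  shows "(\<lambda>x. a * f x + b * g x) \<in> l2 S"
proof -
  have bound: "(cmod (a * f x + b * g x))\<^sup>2
      \<le> 2 * (cmod a)\<^sup>2 * (cmod (f x))\<^sup>2 + 2 * (cmod b)\<^sup>2 * (cmod (g x))\<^sup>2" for x
  proof -
    let ?p = "cmod a * cmod (f x)" and ?q = "cmod b * cmod (g x)"
    have "cmod (a * f x + b * g x) \<le> ?p + ?q"
      by (metis norm_mult norm_triangle_ineq)
    then have "(cmod (a * f x + b * g x))\<^sup>2 \<le> (?p + ?q)\<^sup>2"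
      by (rule power_mono) simp
    also have "\<dots> \<le> 2 * ?p\<^sup>2 + 2 * ?q\<^sup>2"
      using sum_squares_bound[of ?p ?q] unfolding power2_sum by linarith
    finally show ?thesis by (simp only: power_mult_distrib mult.assoc)
  qed
  have "(\<lambda>x. (cmod (f x))\<^sup>2) summable_on S" "(\<lambda>x. (cmod (g x))\<^sup>2) summable_on S"
    using f g by (simp_all add: l2_def)
  then have "(\<lambda>x. 2 * (cmod a)\<^sup>2 * (cmod (f x))\<^sup>2 + 2 * (cmod b)\<^sup>2 * (cmod (g x))\<^sup>2) summable_on S"
    by (intro summable_on_add summable_on_cmult_right)
  then have "(\<lambda>x. (cmod (a * f x + b * g x))\<^sup>2) summable_on S"
    by (rule summable_on_comparison_test) (use bound in auto)
  with f g show ?thesis by (simp add: l2_def)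
qed

text \<open>The component of V_i^{-1} v along the basis vector r of \<F>_i.\<close>
definition fibre :: "'i \<Rightarrow> (('i \<times> 'b) list \<Rightarrow> complex) \<Rightarrow> ('i \<times> 'b) list \<Rightarrow> 'b option \<Rightarrow> complex" where
  "fibre i v r = (\<lambda>a. v (Vjoin i (a, r)))"

lemma fibre_l2:
  assumes "v \<in> l2 (fock_words B)"
  shows "fibre i v r \<in> l2 (Hbasis B i)"
proof -
  have "(\<lambda>x. (cmod (v x))\<^sup>2) summable_on UNIV"
    using assms unfolding l2_def by (subst summable_on_cong_neutral[where T="fock_words B"]) auto
  then have "(\<lambda>x. (cmod (v x))\<^sup>2) summable_on range (\<lambda>a. Vjoin i (a, r))"
    by (rule summable_on_subset) simp
  then have "(\<lambda>a. (cmod (v (Vjoin i (a, r))))\<^sup>2) summable_on Hbasis B i"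
    by (subst (asm) summable_on_reindex[OF inj_Vjoin_left]) (auto intro: summable_on_subset simp: o_def)
  then show ?thesis
    using l2_vanishes[OF assms Vjoin_notin_fock_words] by (auto simp: l2_def fibre_def)
qed

lemma fock_words_sum_reindex:
  "(\<lambda>(r, a). f (Vjoin i (a, r))) summable_on (Fi_words B i \<times> Hbasis B i) \<longleftrightarrow> f summable_on fock_words B"
  "(\<Sum>\<^sub>\<infinity>(r, a)\<in>Fi_words B i \<times> Hbasis B i. f (Vjoin i (a, r))) = infsum f (fock_words B)"
  using summable_on_reindex_bij_betw[OF bij_betw_Vjoin, of f i]
    infsum_reindex_bij_betw[OF bij_betw_Vjoin, of f i]
  by (simp_all add: case_prod_beta')

lemma l2_inner_fibres:
  assumes "f \<in> l2 (fock_words B)" "g \<in> l2 (fock_words B)"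
  shows "l2_inner (fock_words B) f g
       = (\<Sum>\<^sub>\<infinity>r\<in>Fi_words B i. l2_inner (Hbasis B i) (fibre i f r) (fibre i g r))"
proof -
  let ?p = "\<lambda>w. cnj (f w) * g w"
  have sum: "(\<lambda>(r, a). ?p (Vjoin i (a, r))) summable_on (Fi_words B i \<times> Hbasis B i)"
    using fock_words_sum_reindex(1)[of ?p] l2_inner_summable[OF assms] by simp
  have "l2_inner (fock_words B) f g = (\<Sum>\<^sub>\<infinity>(r, a)\<in>Fi_words B i \<times> Hbasis B i. ?p (Vjoin i (a, r)))"
    unfolding l2_inner_def using fock_words_sum_reindex(2)[of ?p] by simp
  also have "\<dots> = (\<Sum>\<^sub>\<infinity>r\<in>Fi_words B i. \<Sum>\<^sub>\<infinity>a\<in>Hbasis B i. ?p (Vjoin i (a, r)))"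
    using infsum_Sigma_banach[OF sum] by simp
  finally show ?thesis unfolding l2_inner_def fibre_def .
qed

lemma l2_norm_sq_fibres:
  assumes "v \<in> l2 (fock_words B)"
  shows "(\<lambda>r. (l2_norm (Hbasis B i) (fibre i v r))\<^sup>2) summable_on Fi_words B i"
    and "(l2_norm (fock_words B) v)\<^sup>2 = (\<Sum>\<^sub>\<infinity>r\<in>Fi_words B i. (l2_norm (Hbasis B i) (fibre i v r))\<^sup>2)"
proof -
  let ?p = "\<lambda>w. (cmod (v w))\<^sup>2"
  have sum: "(\<lambda>(r, a). ?p (Vjoin i (a, r))) summable_on (Fi_words B i \<times> Hbasis B i)"
    using fock_words_sum_reindex(1)[of ?p] assms by (simp add: l2_def)
  have "(\<lambda>a. ?p (Vjoin i (a, r))) summable_on Hbasis B i" for r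
    using fibre_l2[OF assms, of i r] by (simp add: l2_def fibre_def)
  then have "(\<lambda>r. \<Sum>\<^sub>\<infinity>a\<in>Hbasis B i. ?p (Vjoin i (a, r))) summable_on Fi_words B i"
    using summable_on_SigmaD[where f="\<lambda>(r, a). ?p (Vjoin i (a, r))", OF sum] by simp
  then show "(\<lambda>r. (l2_norm (Hbasis B i) (fibre i v r))\<^sup>2) summable_on Fi_words B i"
    by (simp add: l2_norm_sq fibre_def)
  have "(l2_norm (fock_words B) v)\<^sup>2 = (\<Sum>\<^sub>\<infinity>(r, a)\<in>Fi_words B i \<times> Hbasis B i. ?p (Vjoin i (a, r)))"
    unfolding l2_norm_sq using fock_words_sum_reindex(2)[of ?p] by simp
  also have "\<dots> = (\<Sum>\<^sub>\<infinity>r\<in>Fi_words B i. \<Sum>\<^sub>\<infinity>a\<in>Hbasis B i. ?p (Vjoin i (a, r)))"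
    using infsum_Sigma_banach[OF sum] by simp
  finally show "(l2_norm (fock_words B) v)\<^sup>2 = (\<Sum>\<^sub>\<infinity>r\<in>Fi_words B i. (l2_norm (Hbasis B i) (fibre i v r))\<^sup>2)"
    by (simp add: l2_norm_sq fibre_def)
qed

lemma l2_fock_wordsI_fibres:
  assumes "\<And>w. w \<notin> fock_words B \<Longrightarrow> v w = 0"
    and "\<And>r. r \<in> Fi_words B i \<Longrightarrow> fibre i v r \<in> l2 (Hbasis B i)"
    and "(\<lambda>r. (l2_norm (Hbasis B i) (fibre i v r))\<^sup>2) summable_on Fi_words B i"
  shows "v \<in> l2 (fock_words B)"
proof -
  let ?p = "\<lambda>w. (cmod (v w))\<^sup>2"
  have fib: "((\<lambda>a. ?p (Vjoin i (a, r))) has_sum (l2_norm (Hbasis B i) (fibre i v r))\<^sup>2) (Hbasis B i)"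
    if "r \<in> Fi_words B i" for r
    using assms(2)[OF that] by (simp add: l2_def l2_norm_sq fibre_def)
  have "(\<lambda>(r, a). ?p (Vjoin i (a, r))) summable_on (Fi_words B i \<times> Hbasis B i)"
    by (rule summable_on_SigmaI[where f="\<lambda>(r, a). ?p (Vjoin i (a, r))"])
       (use fib assms(3) in auto)
  then show ?thesis
    using fock_words_sum_reindex(1)[of ?p] assms(1) by (simp add: l2_def)
qed

lemma l2_fock_words_fibrewise_bound:
  assumes v: "v \<in> l2 (fock_words B)" and K0: "0 \<le> K"
    and vanish: "\<And>w. w \<notin> fock_words B \<Longrightarrow> u w = 0"
    and fib: "\<And>r. r \<in> Fi_words B i \<Longrightarrow> fibre i u r \<in> l2 (Hbasis B i)"
    and le: "\<And>r. r \<in> Fi_words B i \<Longrightarrow>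
      l2_norm (Hbasis B i) (fibre i u r) \<le> K * l2_norm (Hbasis B i) (fibre i v r)"
  shows "u \<in> l2 (fock_words B)" and "l2_norm (fock_words B) u \<le> K * l2_norm (fock_words B) v"
proof -
  let ?N = "l2_norm (Hbasis B i)"
  have sq_le: "(?N (fibre i u r))\<^sup>2 \<le> K\<^sup>2 * (?N (fibre i v r))\<^sup>2" if "r \<in> Fi_words B i" for r
    using le[OF that] by (metis l2_norm_nonneg power_mono power_mult_distrib)
  have sum_v: "(\<lambda>r. K\<^sup>2 * (?N (fibre i v r))\<^sup>2) summable_on Fi_words B i"
    by (rule summable_on_cmult_right[OF l2_norm_sq_fibres(1)[OF v]])
  have sum: "(\<lambda>r. (?N (fibre i u r))\<^sup>2) summable_on Fi_words B i"
    by (rule summable_on_comparison_test[OF sum_v]) (simp_all add: sq_le)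
  show mem: "u \<in> l2 (fock_words B)"
    by (rule l2_fock_wordsI_fibres[OF vanish fib sum])
  have "(l2_norm (fock_words B) u)\<^sup>2 = (\<Sum>\<^sub>\<infinity>r\<in>Fi_words B i. (?N (fibre i u r))\<^sup>2)"
    by (rule l2_norm_sq_fibres(2)[OF mem])
  also have "\<dots> \<le> (\<Sum>\<^sub>\<infinity>r\<in>Fi_words B i. K\<^sup>2 * (?N (fibre i v r))\<^sup>2)"
    by (rule infsum_mono[OF sum sum_v sq_le])
  also have "\<dots> = (K * l2_norm (fock_words B) v)\<^sup>2"
    by (simp add: infsum_cmult_right' l2_norm_sq_fibres(2)[OF v, where i=i] power_mult_distrib)
  finally show "l2_norm (fock_words B) u \<le> K * l2_norm (fock_words B) v"
    by (rule power2_le_imp_le) (simp add: K0 l2_norm_nonneg)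
qed

lemma fock_words_fun_eqI_fibres:
  assumes "\<And>w. w \<notin> fock_words B \<Longrightarrow> u w = v w"
    and "\<And>r. r \<in> Fi_words B i \<Longrightarrow> fibre i u r = fibre i v r"
  shows "u = v"
proof
  fix w
  show "u w = v w"
  proof (cases "w \<in> fock_words B")
    case True
    then obtain a r where "r \<in> Fi_words B i" "w = Vjoin i (a, r)"
      by (elim fock_words_VjoinE[of _ _ i])
    then show ?thesis using assms(2) by (metis fibre_def)
  qed (rule assms(1))
qed

lemma tilde_lambda_outside_fock_words: "w \<notin> fock_words B \<Longrightarrow> tilde_lambda B i T v w = 0"
  unfolding tilde_lambda_def U_proj_def Vwords_def by simp

lemma fibre_U_proj:
  assumes "v \<in> l2 (fock_words B)" "r \<in> Fi_words B i"
  shows "fibre i (U_proj B i v) r = (if r \<in> Vwords B i then fibre i v r else (\<lambda>_. 0))"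
proof
  fix a
  show "fibre i (U_proj B i v) r a = (if r \<in> Vwords B i then fibre i v r else (\<lambda>_. 0)) a"
  proof (cases "a \<in> Hbasis B i")
    case True
    then show ?thesis using assms(2) by (simp add: fibre_def U_proj_def Vjoin_in_Vwords_iff)
  next
    case False
    then have "Vjoin i (a, r) \<notin> fock_words B" by (rule Vjoin_notin_fock_words)
    then show ?thesis
      using l2_vanishes[OF assms(1)] Vwords_subset_fock_words by (auto simp: fibre_def U_proj_def)
  qed
qed

lemma tilde_lambda_Vjoin:
  assumes r: "r \<in> Fi_words B i" and a: "a \<in> Hbasis B i"
  shows "tilde_lambda B i T v (Vjoin i (a, r))
       = (if r \<in> Vwords B i then T (fibre i (U_proj B i v) r) a else 0)"
proof -
  have "lambda_op B i T u (Vjoin i (a, r)) = T (fibre i u r) a" for u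
    using Vjoin_in_fock_words[OF r a] Vsplit_Vjoin[OF r, of a]
    unfolding lambda_op_def fibre_def by simp
  then show ?thesis
    using Vjoin_in_Vwords_iff[OF r a] unfolding tilde_lambda_def U_proj_def by simp
qed

lemma fibre_tilde_lambda:
  assumes T: "bounded_op (Hbasis B i) T" and v: "v \<in> l2 (fock_words B)" and r: "r \<in> Fi_words B i"
  shows "fibre i (tilde_lambda B i T v) r = (if r \<in> Vwords B i then T (fibre i v r) else (\<lambda>_. 0))"
proof
  fix a
  show "fibre i (tilde_lambda B i T v) r a = (if r \<in> Vwords B i then T (fibre i v r) else (\<lambda>_. 0)) a"
  proof (cases "a \<in> Hbasis B i")
    case True
    then show ?thesis
      unfolding fibre_def tilde_lambda_Vjoin[OF r True] using fibre_U_proj[OF v r]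
      by (simp add: fibre_def)
  next
    case False
    then have "Vjoin i (a, r) \<notin> fock_words B" by (rule Vjoin_notin_fock_words)
    then show ?thesis
      using tilde_lambda_outside_fock_words l2_vanishes[OF bounded_op_l2[OF T fibre_l2[OF v]] False]
      by (simp add: fibre_def)
  qed
qed

lemma tilde_lambda_linear:
  assumes T: "bounded_op (Hbasis B i) T" and f: "f \<in> l2 (fock_words B)" and g: "g \<in> l2 (fock_words B)"
  shows "tilde_lambda B i T (\<lambda>x. a * f x + b * g x)
       = (\<lambda>x. a * tilde_lambda B i T f x + b * tilde_lambda B i T g x)"
proof (rule fock_words_fun_eqI_fibres[where i=i])
  fix r assume r: "r \<in> Fi_words B i"
  have "fibre i (\<lambda>x. a * f x + b * g x) r = (\<lambda>x. a * fibre i f r x + b * fibre i g r x)"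
    by (simp add: fibre_def)
  then show "fibre i (tilde_lambda B i T (\<lambda>x. a * f x + b * g x)) r
      = fibre i (\<lambda>x. a * tilde_lambda B i T f x + b * tilde_lambda B i T g x) r"
    using fibre_tilde_lambda[OF T l2_lincomb[OF f g] r] fibre_tilde_lambda[OF T f r]
      fibre_tilde_lambda[OF T g r] bounded_op_linear[OF T fibre_l2[OF f] fibre_l2[OF g]]
    by (simp add: fibre_def fun_eq_iff)
qed (simp add: tilde_lambda_outside_fock_words)

lemma tilde_lambda_lincomb_operator:
  "tilde_lambda B i (\<lambda>f x. a * T f x + b * S f x) v
     = (\<lambda>w. a * tilde_lambda B i T v w + b * tilde_lambda B i S v w)"
  by (simp add: tilde_lambda_def U_proj_def lambda_op_def fun_eq_iff)

lemma tilde_lambda_bounded: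
  assumes T: "bounded_op (Hbasis B i) T"
  shows "bounded_op (fock_words B) (tilde_lambda B i T)"
proof -
  obtain K where K0: "0 \<le> K"
    and K: "\<And>f. f \<in> l2 (Hbasis B i) \<Longrightarrow> l2_norm (Hbasis B i) (T f) \<le> K * l2_norm (Hbasis B i) f"
    using bounded_op_nonneg_bound[OF T] by blast
  have "tilde_lambda B i T v \<in> l2 (fock_words B)
      \<and> l2_norm (fock_words B) (tilde_lambda B i T v) \<le> K * l2_norm (fock_words B) v"
    if v: "v \<in> l2 (fock_words B)" for v
  proof -
    have "fibre i (tilde_lambda B i T v) r \<in> l2 (Hbasis B i)
        \<and> l2_norm (Hbasis B i) (fibre i (tilde_lambda B i T v) r) \<le> K * l2_norm (Hbasis B i) (fibre i v r)"
      if "r \<in> Fi_words B i" for r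
      using bounded_op_l2[OF T fibre_l2[OF v]] K[OF fibre_l2[OF v]] K0
      by (simp add: fibre_tilde_lambda[OF T v that] l2_norm_nonneg)
    then show ?thesis
      using l2_fock_words_fibrewise_bound[OF v K0, where u="tilde_lambda B i T v" and i=i]
        tilde_lambda_outside_fock_words
      by blast
  qed
  then show ?thesis
    unfolding bounded_op_def using tilde_lambda_linear[OF T] by blast
qed

lemma tilde_lambda_comp:
  assumes T: "bounded_op (Hbasis B i) T" and S: "bounded_op (Hbasis B i) S"
    and v: "v \<in> l2 (fock_words B)"
  shows "tilde_lambda B i (T \<circ> S) v = tilde_lambda B i T (tilde_lambda B i S v)"
proof (rule fock_words_fun_eqI_fibres[where i=i])
  fix r assume r: "r \<in> Fi_words B i"
  have Sv: "tilde_lambda B i S v \<in> l2 (fock_words B)"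
    using bounded_op_l2[OF tilde_lambda_bounded[OF S] v] .
  show "fibre i (tilde_lambda B i (T \<circ> S) v) r = fibre i (tilde_lambda B i T (tilde_lambda B i S v)) r"
    using fibre_tilde_lambda[OF bounded_op_comp[OF T S] v r] fibre_tilde_lambda[OF T Sv r]
      fibre_tilde_lambda[OF S v r] by simp
qed (simp add: tilde_lambda_outside_fock_words)

lemma tilde_lambda_adjoint:
  assumes T: "bounded_op (Hbasis B i) T" and A: "is_adjoint (Hbasis B i) T T'"
  shows "is_adjoint (fock_words B) (tilde_lambda B i T) (tilde_lambda B i T')"
proof -
  have T': "bounded_op (Hbasis B i) T'"
    and adj: "\<And>x y. x \<in> l2 (Hbasis B i) \<Longrightarrow> y \<in> l2 (Hbasis B i) \<Longrightarrow>
      l2_inner (Hbasis B i) (T x) y = l2_inner (Hbasis B i) x (T' y)"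
    using A unfolding is_adjoint_def by blast+
  have "l2_inner (fock_words B) (tilde_lambda B i T f) g = l2_inner (fock_words B) f (tilde_lambda B i T' g)"
    if f: "f \<in> l2 (fock_words B)" and g: "g \<in> l2 (fock_words B)" for f g
  proof -
    have "l2_inner (fock_words B) (tilde_lambda B i T f) g
        = (\<Sum>\<^sub>\<infinity>r\<in>Fi_words B i. l2_inner (Hbasis B i) (fibre i (tilde_lambda B i T f) r) (fibre i g r))"
      by (rule l2_inner_fibres[OF bounded_op_l2[OF tilde_lambda_bounded[OF T] f] g])
    also have "\<dots> = (\<Sum>\<^sub>\<infinity>r\<in>Fi_words B i. l2_inner (Hbasis B i) (fibre i f r) (fibre i (tilde_lambda B i T' g) r))"
      by (rule infsum_cong)
         (simp add: fibre_tilde_lambda[OF T f] fibre_tilde_lambda[OF T' g] adj fibre_l2 f g)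
    also have "\<dots> = l2_inner (fock_words B) f (tilde_lambda B i T' g)"
      by (rule l2_inner_fibres[OF f bounded_op_l2[OF tilde_lambda_bounded[OF T'] g], symmetric])
    finally show ?thesis .
  qed
  with tilde_lambda_bounded[OF T'] show ?thesis
    unfolding is_adjoint_def by blast
qed

theorem mainTheorem13:
  fixes B :: "'i::linorder \<Rightarrow> 'b set" and i :: 'i
  shows
   "(\<forall>T. bounded_op (Hbasis B i) T \<longrightarrow> bounded_op (fock_words B) (tilde_lambda B i T)) \<and>
    (\<forall>T S a b. bounded_op (Hbasis B i) T \<longrightarrow> bounded_op (Hbasis B i) S \<longrightarrow>
       (\<forall>v\<in>l2 (fock_words B).
          tilde_lambda B i (\<lambda>f x. a * T f x + b * S f x) v
            = (\<lambda>w. a * tilde_lambda B i T v w + b * tilde_lambda B i S v w))) \<and>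
    (\<forall>T S. bounded_op (Hbasis B i) T \<longrightarrow> bounded_op (Hbasis B i) S \<longrightarrow>
       (\<forall>v\<in>l2 (fock_words B).
          tilde_lambda B i (T \<circ> S) v = tilde_lambda B i T (tilde_lambda B i S v))) \<and>
    (\<forall>T T'. bounded_op (Hbasis B i) T \<longrightarrow> is_adjoint (Hbasis B i) T T' \<longrightarrow>
       is_adjoint (fock_words B) (tilde_lambda B i T) (tilde_lambda B i T'))"
  by (simp add: tilde_lambda_bounded tilde_lambda_lincomb_operator tilde_lambda_comp
      tilde_lambda_adjoint)

end
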